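(* Let $\mathrm{GNN}$ be a node-most-expressive GNN and let $\mathrm{AGG}$ be an injective function on finite multisets of node representations. Fix a labeling trick, and for a node set $S$ and graph tensor ${\mathcal A}$ write ${\mathcal A}^{(S)}$ for the labeled graph it produces. Define $\mathrm{GNN}(S,{\mathcal A}^{(S)}) := \mathrm{AGG}(\{\mathrm{GNN}(i,{\mathcal A}^{(S)}) \mid i\in S\})$. Then for all $n$-node graph tensors ${\mathcal A},{\mathcal A}'$ and all node sets $S,S'\subseteq\{1,\dots,n\}$, $$\mathrm{GNN}(S,{\mathcal A}^{(S)}) = \mathrm{GNN}(S',{\mathcal A}'^{(S')}) \iff (S,{\mathcal A}) \simeq (S',{\mathcal A}').$$
   Context: A graph on node set $V=\{1,\dots,n\}$ is encoded by a tensor ${\mathcal A}\in\mathbb R^{n\times n\times k}$: ${\mathcal A}_{i,i,:}$ are the features of node $i$, ${\mathcal A}_{i,j,:}$ ($i\ne j$) the features of edge $(i,j)$, and the first slice ${\mathcal A}_{:,:,1}$ is the adjacency matrix (if there are no features, ${\mathcal A}$ is the adjacency matrix). A permutation $\pi$ of $\{1,\dots,n\}$ acts by $\pi(S)=\{\pi(i):i\in S\}$ and $\pi({\mathcal A})_{\pi(i),\pi(j),:}={\mathcal A}_{i,j,:}$. Set isomorphism: $(S,{\mathcal A})\simeq(S',{\mathcal A}')$ iff there is a permutation $\pi$ with $S=\pi(S')$ and ${\mathcal A}=\pi({\mathcal A}')$; for a single node we write $(i,{\mathcal A})$ for $(\{i\},{\mathcal A})$. A GNN is a map $(i,{\mathcal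 A})\mapsto \mathrm{GNN}(i,{\mathcal A})$ (defined for graph tensors with any number of feature channels); it is node-most-expressive if for all $i,{\mathcal A},j,{\mathcal A}'$: $\mathrm{GNN}(i,{\mathcal A})=\mathrm{GNN}(j,{\mathcal A}')\iff (i,{\mathcal A})\simeq(j,{\mathcal A}')$. A labeling trick assigns to each $(S,{\mathcal A})$ a labeling tensor ${\mathcal L}^{(S)}\in\mathbb R^{n\times n\times d}$, and ${\mathcal A}^{(S)}\in\mathbb R^{n\times n\times(k+d)}$ is obtained by stacking ${\mathcal L}^{(S)}$ onto ${\mathcal A}$ along the third dimension; it must satisfy, for all $S,{\mathcal A},S',{\mathcal A}'$ and permutations $\pi$: (1) ${\mathcal L}^{(S)}=\pi({\mathcal L}^{(S')})\Rightarrow S=\pi(S')$, and (2) $S=\pi(S')$ and ${\mathcal A}=\pi({\mathcal A}')\Rightarrow {\mathcal L}^{(S)}=\pi({\mathcal L}^{(S')})$. *)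

theory Defs
  imports Complex_Main "HOL-Library.Multiset" "HOL-Combinatorics.Permutations"
begin

text \<open>A graph tensor on node set {1..n} with k feature channels is represented as a
  function giving, for each pair (i,j), the feature vector A_{i,j,:} as a list of
  length k; outside {1..n} x {1..n} the value is the empty list (canonical form).\<close>

type_synonym gtensor = "nat \<Rightarrow> nat \<Rightarrow> real list"

definition is_tensor :: "nat \<Rightarrow> nat \<Rightarrow> gtensor \<Rightarrow> bool" where
  "is_tensor n k A \<longleftrightarrow>
     (\<forall>i j. (i \<in> {1..n} \<and> j \<in> {1..n} \<longrightarrow> length (A i j) = k) \<and>
            (\<not> (i \<in> {1..n} \<and> j \<in> {1..n}) \<longrightarrow> A i j = []))"

definition graph_tensor :: "nat \<Rightarrow> nat \<Rightarrow> gtensor \<Rightarrow> bool" where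
  "graph_tensor n k A \<longleftrightarrow> 1 \<le> k \<and> is_tensor n k A \<and>
     (\<forall>i\<in>{1..n}. \<forall>j\<in>{1..n}. A i j ! 0 \<in> {0, 1})"

text \<open>Permutation action: pi(A)_{pi i, pi j} = A_{i,j}.\<close>
definition perm_tensor :: "(nat \<Rightarrow> nat) \<Rightarrow> gtensor \<Rightarrow> gtensor" where
  "perm_tensor \<pi> A = (\<lambda>i j. A (inv \<pi> i) (inv \<pi> j))"

definition set_iso :: "nat \<Rightarrow> nat set \<Rightarrow> gtensor \<Rightarrow> nat set \<Rightarrow> gtensor \<Rightarrow> bool" where
  "set_iso n S A S' A' \<longleftrightarrow>
     (\<exists>\<pi>. \<pi> permutes {1..n} \<and> S = \<pi> ` S' \<and> A = perm_tensor \<pi> A')"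

definition node_most_expressive :: "nat \<Rightarrow> (nat \<Rightarrow> gtensor \<Rightarrow> 'r) \<Rightarrow> bool" where
  "node_most_expressive n GNN \<longleftrightarrow>
     (\<forall>k k' A A' i j. graph_tensor n k A \<longrightarrow> graph_tensor n k' A' \<longrightarrow>
        i \<in> {1..n} \<longrightarrow> j \<in> {1..n} \<longrightarrow>
        (GNN i A = GNN j A' \<longleftrightarrow> set_iso n {i} A {j} A'))"

definition stack :: "gtensor \<Rightarrow> gtensor \<Rightarrow> gtensor" where
  "stack A L = (\<lambda>i j. A i j @ L i j)"

definition labeling_trick :: "nat \<Rightarrow> nat \<Rightarrow> (nat set \<Rightarrow> gtensor \<Rightarrow> gtensor) \<Rightarrow> bool" where
  "labeling_trick n d L \<longleftrightarrow>
     (\<forall>S A k. S \<subseteq> {1..n} \<longrightarrow> graph_tensor n k A \<longrightarrow> is_tensor n d (L S A)) \<and>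
     (\<forall>S A S' A' k k' \<pi>. S \<subseteq> {1..n} \<longrightarrow> S' \<subseteq> {1..n} \<longrightarrow>
        graph_tensor n k A \<longrightarrow> graph_tensor n k' A' \<longrightarrow> \<pi> permutes {1..n} \<longrightarrow>
        (L S A = perm_tensor \<pi> (L S' A') \<longrightarrow> S = \<pi> ` S') \<and>
        (S = \<pi> ` S' \<and> A = perm_tensor \<pi> A' \<longrightarrow> L S A = perm_tensor \<pi> (L S' A')))"

definition labeled :: "(nat set \<Rightarrow> gtensor \<Rightarrow> gtensor) \<Rightarrow> nat set \<Rightarrow> gtensor \<Rightarrow> gtensor" where
  "labeled L S A = stack A (L S A)"

definition set_gnn :: "('r multiset \<Rightarrow> 'o) \<Rightarrow> (nat \<Rightarrow> gtensor \<Rightarrow> 'r) \<Rightarrow> nat set \<Rightarrow> gtensor \<Rightarrow> 'o" where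
  "set_gnn AGG GNN S A' = AGG (image_mset (\<lambda>i. GNN i A') (mset_set S))"

end

theory Submission
  imports Defs
begin

text \<open>If some node i of S and some node j of S' receive the same representation in the two
  labeled graphs, node-most-expressiveness yields a permutation \<pi> carrying the labeled
  graph of (S', A') onto that of (S, A). Since the labels are appended as the last d channels
  of every entry, \<pi> then carries A' onto A and the labeling of S' onto that of S, and
  property (1) of the labeling trick forces \<pi> to carry S' onto S. Conversely, an isomorphism
  transports the labels by property (2), and the node GNN is invariant under simultaneous
  relabeling of node and graph, so both multisets of node representations agree.\<close>

lemma is_tensor_perm_tensor:
  assumes "is_tensor n k A" and \<pi>: "\<pi> permutes {1..n}"
  shows "is_tensor n k (perm_tensor \<pi> A)"
proof -
  have "inv \<pi> i \<in> {1..n} \<longleftrightarrow> i \<in> {1..n}" for i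
    using permutes_in_image[OF permutes_inv[OF \<pi>]] .
  then show ?thesis
    using assms(1) unfolding is_tensor_def perm_tensor_def by presburger
qed

lemma graph_tensor_perm_tensor:
  assumes "graph_tensor n k A" and \<pi>: "\<pi> permutes {1..n}"
  shows "graph_tensor n k (perm_tensor \<pi> A)"
  using assms(1) is_tensor_perm_tensor[OF _ \<pi>] permutes_in_image[OF permutes_inv[OF \<pi>]]
  unfolding graph_tensor_def by (simp add: perm_tensor_def)

lemma graph_tensor_stack:
  assumes "graph_tensor n k A" and "is_tensor n d B"
  shows "graph_tensor n (k + d) (stack A B)"
  using assms unfolding graph_tensor_def is_tensor_def stack_def
  by (auto simp: nth_append)

lemma perm_tensor_stack:
  "perm_tensor \<pi> (stack A B) = stack (perm_tensor \<pi> A) (perm_tensor \<pi> B)"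
  unfolding perm_tensor_def stack_def by simp

lemma stack_inject:
  assumes "is_tensor n d B" and "is_tensor n d B'" and "stack A B = stack A' B'"
  shows "A = A' \<and> B = B'"
proof -
  have "length (B i j) = length (B' i j)" for i j
    using assms(1,2) unfolding is_tensor_def by (metis list.size(3))
  then show ?thesis
    using assms(3) unfolding stack_def by (simp add: fun_eq_iff)
qed

lemma labeling_trick_is_tensor:
  assumes "labeling_trick n d L" and "S \<subseteq> {1..n}" and "graph_tensor n k A"
  shows "is_tensor n d (L S A)"
  using assms unfolding labeling_trick_def by blast

lemma labeling_trick_determines_set:
  assumes "labeling_trick n d L" and "S \<subseteq> {1..n}" and "S' \<subseteq> {1..n}"
    and "graph_tensor n k A" and "graph_tensor n k' A'" and "\<pi> permutes {1..n}"
    and "L S A = perm_tensor \<pi> (L S' A')"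
  shows "S = \<pi> ` S'"
  using assms(1)[unfolded labeling_trick_def, THEN conjunct2, rule_format, OF assms(2-6)] assms(7)
  by blast

lemma labeling_trick_equivariant:
  assumes "labeling_trick n d L" and "S \<subseteq> {1..n}" and "S' \<subseteq> {1..n}"
    and "graph_tensor n k A" and "graph_tensor n k' A'" and "\<pi> permutes {1..n}"
    and "S = \<pi> ` S'" and "A = perm_tensor \<pi> A'"
  shows "L S A = perm_tensor \<pi> (L S' A')"
  using assms(1)[unfolded labeling_trick_def, THEN conjunct2, rule_format, OF assms(2-6)] assms(7,8)
  by blast

lemma graph_tensor_labeled:
  assumes "labeling_trick n d L" and "S \<subseteq> {1..n}" and "graph_tensor n k A"
  shows "graph_tensor n (k + d) (labeled L S A)"
  unfolding labeled_def
  using graph_tensor_stack[OF assms(3) labeling_trick_is_tensor[OF assms]] .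

lemma labeled_perm_tensor:
  assumes "labeling_trick n d L" and "S' \<subseteq> {1..n}" and "graph_tensor n k' A'"
    and \<pi>: "\<pi> permutes {1..n}"
  shows "labeled L (\<pi> ` S') (perm_tensor \<pi> A') = perm_tensor \<pi> (labeled L S' A')"
proof -
  have "\<pi> ` S' \<subseteq> {1..n}"
    using assms(2) permutes_image[OF \<pi>] by blast
  then have "L (\<pi> ` S') (perm_tensor \<pi> A') = perm_tensor \<pi> (L S' A')"
    using labeling_trick_equivariant[OF assms(1) _ assms(2) graph_tensor_perm_tensor[OF assms(3) \<pi>]
        assms(3) \<pi>] by blast
  then show ?thesis
    unfolding labeled_def perm_tensor_stack by simp
qed

lemma set_iso_if_labeled_eq_perm_tensor:
  assumes "labeling_trick n d L" and "S \<subseteq> {1..n}" and "S' \<subseteq> {1..n}"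
    and "graph_tensor n k A" and "graph_tensor n k' A'" and \<pi>: "\<pi> permutes {1..n}"
    and "labeled L S A = perm_tensor \<pi> (labeled L S' A')"
  shows "set_iso n S A S' A'"
proof -
  have "is_tensor n d (perm_tensor \<pi> (L S' A'))"
    using labeling_trick_is_tensor[OF assms(1,3,5)] is_tensor_perm_tensor[OF _ \<pi>] by blast
  then have "A = perm_tensor \<pi> A' \<and> L S A = perm_tensor \<pi> (L S' A')"
    using stack_inject labeling_trick_is_tensor[OF assms(1,2,4)] assms(7)
    unfolding labeled_def perm_tensor_stack by blast
  moreover from this have "S = \<pi> ` S'"
    using labeling_trick_determines_set[OF assms(1-6)] by blast
  ultimately show ?thesis
    unfolding set_iso_def using \<pi> by blast
qed

lemma node_most_expressiveD:
  assumes "node_most_expressive n GNN" and "graph_tensor n k A" and "graph_tensor n k' A'"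
    and "i \<in> {1..n}" and "j \<in> {1..n}"
  shows "GNN i A = GNN j A' \<longleftrightarrow> set_iso n {i} A {j} A'"
  using assms unfolding node_most_expressive_def by blast

lemma node_most_expressive_perm_tensor:
  assumes "node_most_expressive n GNN" and "graph_tensor n k B"
    and \<pi>: "\<pi> permutes {1..n}" and "j \<in> {1..n}"
  shows "GNN (\<pi> j) (perm_tensor \<pi> B) = GNN j B"
proof -
  have "set_iso n {\<pi> j} (perm_tensor \<pi> B) {j} B"
    unfolding set_iso_def using \<pi> by auto
  then show ?thesis
    using node_most_expressiveD[OF assms(1) graph_tensor_perm_tensor[OF assms(2) \<pi>] assms(2)]
      permutes_in_image[OF \<pi>] assms(4) by blast
qed

lemma set_gnn_perm_tensor:
  assumes "node_most_expressive n GNN" and "graph_tensor n k B"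
    and \<pi>: "\<pi> permutes {1..n}" and T: "T \<subseteq> {1..n}"
  shows "set_gnn AGG GNN (\<pi> ` T) (perm_tensor \<pi> B) = set_gnn AGG GNN T B"
proof -
  have "finite T"
    using T finite_subset by blast
  have "image_mset (\<lambda>i. GNN i (perm_tensor \<pi> B)) (mset_set (\<pi> ` T))
      = image_mset (\<lambda>j. GNN (\<pi> j) (perm_tensor \<pi> B)) (mset_set T)"
    unfolding image_mset_mset_set[OF permutes_inj_on[OF \<pi>], symmetric]
    by (simp add: multiset.map_comp comp_def)
  also have "\<dots> = image_mset (\<lambda>j. GNN j B) (mset_set T)"
  proof (rule image_mset_cong)
    fix j
    assume "j \<in># mset_set T"
    then have "j \<in> {1..n}"
      using T \<open>finite T\<close> by auto
    then show "GNN (\<pi> j) (perm_tensor \<pi> B) = GNN j B"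
      using node_most_expressive_perm_tensor[OF assms(1-3)] by blast
  qed
  finally show ?thesis
    unfolding set_gnn_def by simp
qed

lemma set_gnn_eq_imp_node_eq:
  assumes "inj AGG" and "set_gnn AGG GNN S B = set_gnn AGG GNN S' B'"
    and "finite S" and "finite S'" and "i \<in> S"
  obtains j where "j \<in> S'" and "GNN i B = GNN j B'"
proof -
  have "image_mset (\<lambda>i. GNN i B) (mset_set S) = image_mset (\<lambda>j. GNN j B') (mset_set S')"
    using assms(1,2) unfolding set_gnn_def inj_def by blast
  moreover have "GNN i B \<in># image_mset (\<lambda>i. GNN i B) (mset_set S)"
    using assms(3,5) by simp
  ultimately show ?thesis
    using that assms(4) by auto
qed

theorem theorem1:
  fixes GNN :: "nat \<Rightarrow> gtensor \<Rightarrow> 'r" and AGG :: "'r multiset \<Rightarrow> 'o"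
    and L :: "nat set \<Rightarrow> gtensor \<Rightarrow> gtensor"
  assumes "node_most_expressive n GNN"
    and "inj AGG"
    and "labeling_trick n d L"
    and "graph_tensor n k A" and "graph_tensor n k' A'"
    and "S \<subseteq> {1..n}" and "S' \<subseteq> {1..n}" and "S \<noteq> {}" and "S' \<noteq> {}"
  shows "set_gnn AGG GNN S (labeled L S A) = set_gnn AGG GNN S' (labeled L S' A')
           \<longleftrightarrow> set_iso n S A S' A'"
proof
  assume eq: "set_gnn AGG GNN S (labeled L S A) = set_gnn AGG GNN S' (labeled L S' A')"
  obtain i where "i \<in> S"
    using assms(8) by blast
  have "finite S" and "finite S'"
    using assms(6,7) finite_subset by blast+
  then obtain j where "j \<in> S'" and "GNN i (labeled L S A) = GNN j (labeled L S' A')"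
    using set_gnn_eq_imp_node_eq[OF assms(2) eq] \<open>i \<in> S\<close> by blast
  then have "set_iso n {i} (labeled L S A) {j} (labeled L S' A')"
    using node_most_expressiveD[OF assms(1) graph_tensor_labeled graph_tensor_labeled]
      assms(3-7) \<open>i \<in> S\<close> by blast
  then obtain \<pi> where "\<pi> permutes {1..n}"
    and "labeled L S A = perm_tensor \<pi> (labeled L S' A')"
    unfolding set_iso_def by blast
  then show "set_iso n S A S' A'"
    using set_iso_if_labeled_eq_perm_tensor assms(3-7) by blast
next
  assume "set_iso n S A S' A'"
  then obtain \<pi> where \<pi>: "\<pi> permutes {1..n}" and "S = \<pi> ` S'" and "A = perm_tensor \<pi> A'"
    unfolding set_iso_def by blast
  then show "set_gnn AGG GNN S (labeled L S A) = set_gnn AGG GNN S' (labeled L S' A')"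
    using labeled_perm_tensor[OF assms(3,7,5) \<pi>]
      set_gnn_perm_tensor[OF assms(1) graph_tensor_labeled[OF assms(3,7,5)] \<pi> assms(7)]
    by simp
qed

end
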